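(* Let $d\ge2$, $\alpha\in[0,1]$, $|\phi_+\rangle=d^{-1/2}\sum_{i=1}^d|i\rangle\otimes|i\rangle$, and $\rho=\alpha\,\mathbb I/d^2+(1-\alpha)|\phi_+\rangle\langle\phi_+|$ on $\mathbb C^d\otimes\mathbb C^d$. Let $p_n=\mathrm{Tr}[(\rho^{T_A})^n]$. Then $p_3<p_2^2$ if and only if $\rho^{T_A}$ has a negative eigenvalue (which happens exactly when $\alpha<d/(d+1)$).
   Context: The partial transpose on the first factor $A$ is defined in the computational product basis by $(|k_A,k_B\rangle\langle l_A,l_B|)^{T_A}=|l_A,k_B\rangle\langle k_A,l_B|$. *)

theory Defs
  imports "Jordan_Normal_Form.Char_Poly"
begin

text \<open>Computational product basis of C^d (x) C^d: basis vector |i,j> (i,j < d)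
  is encoded as index i*d + j, so index r corresponds to (r div d, r mod d).\<close>

definition phi_plus :: "nat \<Rightarrow> complex vec" where
  "phi_plus d = vec (d*d) (\<lambda>r. if r div d = r mod d then complex_of_real (1 / sqrt (real d)) else 0)"

definition ket_bra :: "complex vec \<Rightarrow> complex mat" where
  "ket_bra v = mat (dim_vec v) (dim_vec v) (\<lambda>(r,c). v $ r * cnj (v $ c))"

definition iso_state :: "nat \<Rightarrow> real \<Rightarrow> complex mat" where
  "iso_state d \<alpha> = complex_of_real (\<alpha> / (real d)^2) \<cdot>\<^sub>m 1\<^sub>m (d*d)
     + complex_of_real (1 - \<alpha>) \<cdot>\<^sub>m ket_bra (phi_plus d)"

text \<open>Partial transpose on the first factor:
  (|kA,kB><lA,lB|)^{T_A} = |lA,kB><kA,lB|, i.e.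
  M^{T_A}_{(a,b),(c,e)} = M_{(c,b),(a,e)}.\<close>

definition partial_transpose_A :: "nat \<Rightarrow> complex mat \<Rightarrow> complex mat" where
  "partial_transpose_A d M = mat (d*d) (d*d)
     (\<lambda>(r,c). M $$ ((c div d) * d + r mod d, (r div d) * d + c mod d))"

definition mat_trace :: "complex mat \<Rightarrow> complex" where
  "mat_trace M = (\<Sum>i<dim_row M. M $$ (i,i))"

text \<open>p_n = Tr[(rho^{T_A})^n]; this trace is real (rho^{T_A} is Hermitian), we take its real part.\<close>

definition pt_moment :: "nat \<Rightarrow> real \<Rightarrow> nat \<Rightarrow> real" where
  "pt_moment d \<alpha> n = Re (mat_trace (partial_transpose_A d (iso_state d \<alpha>) ^\<^sub>m n))"

end

theory Submission
  imports Defs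
begin

text \<open>Write \<open>\<rho>\<^sup>T\<^sup>\<^sub>A = a \<one> + c F\<close> with \<open>a = \<alpha>/d\<^sup>2\<close>, \<open>c = (1 - \<alpha>)/d\<close> and \<open>F\<close> the flip
  \<open>|i,j\<rangle> \<mapsto> |j,i\<rangle>\<close>. Since \<open>F\<^sup>2 = \<one>\<close>, powers stay in the span of \<open>\<one>\<close> and \<open>F\<close>, whose
  traces are \<open>d\<^sup>2\<close> and \<open>d\<close>, so the moments are explicit polynomials in \<open>a, c\<close>. Every eigenvalue
  \<open>t\<close> satisfies \<open>(t - a)\<^sup>2 = c\<^sup>2\<close>, and antisymmetric vectors (which exist for \<open>d \<ge> 2\<close>) realise
  \<open>a - c\<close>; hence a negative eigenvalue exists iff \<open>a < c\<close>. Using \<open>d\<^sup>2 a + d c = 1\<close> to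
  homogenise, \<open>p\<^sub>2\<^sup>2 - p\<^sub>3 = d\<^sup>2 (d\<^sup>2 - 1) c\<^sup>2 (c\<^sup>2 - a\<^sup>2)\<close>, which is positive iff \<open>a < c\<close> too.\<close>

lemma smult_mat_mult_vec:
  fixes A :: "'a :: comm_semiring_0 mat"
  assumes "dim_vec v = dim_col A"
  shows "(k \<cdot>\<^sub>m A) *\<^sub>v v = k \<cdot>\<^sub>v (A *\<^sub>v v)"
  using assms by (intro eq_vecI) (auto simp: scalar_prod_def sum_distrib_left ac_simps)

lemma combination_mult_vec:
  fixes F :: "'a :: comm_semiring_1 mat"
  assumes "F \<in> carrier_mat n n" "v \<in> carrier_vec n"
  shows "(x \<cdot>\<^sub>m 1\<^sub>m n + y \<cdot>\<^sub>m F) *\<^sub>v v = x \<cdot>\<^sub>v v + y \<cdot>\<^sub>v (F *\<^sub>v v)"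
  using assms by (simp add: add_mult_distrib_mat_vec[of _ n n] smult_mat_mult_vec)

lemma involution_combination_mult:
  fixes F :: "'a :: comm_ring_1 mat"
  assumes F: "F \<in> carrier_mat n n" and FF: "F * F = 1\<^sub>m n"
  shows "(p \<cdot>\<^sub>m 1\<^sub>m n + q \<cdot>\<^sub>m F) * (r \<cdot>\<^sub>m 1\<^sub>m n + s \<cdot>\<^sub>m F)
       = (p * r + q * s) \<cdot>\<^sub>m 1\<^sub>m n + (p * s + q * r) \<cdot>\<^sub>m F"
proof -
  define B where "B = r \<cdot>\<^sub>m 1\<^sub>m n + s \<cdot>\<^sub>m F"
  have B: "B \<in> carrier_mat n n" using F by (simp add: B_def)
  have FB: "F * B = r \<cdot>\<^sub>m F + s \<cdot>\<^sub>m 1\<^sub>m n"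
    unfolding B_def using F
    by (simp add: mult_add_distrib_mat[OF F, of _ n] mult_smult_distrib[OF F, of _ n] FF)
  have "(p \<cdot>\<^sub>m 1\<^sub>m n + q \<cdot>\<^sub>m F) * B = p \<cdot>\<^sub>m B + q \<cdot>\<^sub>m (F * B)"
    using F B by (simp add: add_mult_distrib_mat[of _ n n] mult_smult_assoc_mat[of _ n n])
  also have "\<dots> = (p * r + q * s) \<cdot>\<^sub>m 1\<^sub>m n + (p * s + q * r) \<cdot>\<^sub>m F"
    unfolding FB unfolding B_def using F by (intro eq_matI) (auto simp: algebra_simps)
  finally show ?thesis unfolding B_def .
qed

lemma eigenvector_combination:
  fixes F :: "'a :: comm_ring_1 mat"
  assumes F: "F \<in> carrier_mat n n" and v: "eigenvector F v \<mu>"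
  shows "eigenvector (a \<cdot>\<^sub>m 1\<^sub>m n + c \<cdot>\<^sub>m F) v (a + c * \<mu>)"
proof -
  have vc: "v \<in> carrier_vec n" and Fv: "F *\<^sub>v v = \<mu> \<cdot>\<^sub>v v" and "v \<noteq> 0\<^sub>v n"
    using F v unfolding eigenvector_def by auto
  moreover have "(a \<cdot>\<^sub>m 1\<^sub>m n + c \<cdot>\<^sub>m F) *\<^sub>v v = (a + c * \<mu>) \<cdot>\<^sub>v v"
    unfolding combination_mult_vec[OF F vc] Fv using vc
    by (intro eq_vecI) (auto simp: algebra_simps)
  ultimately show ?thesis using F unfolding eigenvector_def by simp
qed

lemma eigenvalue_involution_combination:
  fixes F :: "'a :: field mat"
  assumes F: "F \<in> carrier_mat n n" and FF: "F * F = 1\<^sub>m n"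
    and ev: "eigenvalue (a \<cdot>\<^sub>m 1\<^sub>m n + c \<cdot>\<^sub>m F) t"
  shows "(t - a)\<^sup>2 = c\<^sup>2"
proof -
  let ?A = "a \<cdot>\<^sub>m 1\<^sub>m n + c \<cdot>\<^sub>m F"
  have A: "?A \<in> carrier_mat n n" using F by simp
  obtain v where vc: "v \<in> carrier_vec n" and v0: "v \<noteq> 0\<^sub>v n" and Av: "?A *\<^sub>v v = t \<cdot>\<^sub>v v"
    using ev A unfolding eigenvalue_def eigenvector_def by auto
  obtain i where i: "i < n" and vi: "v $ i \<noteq> 0"
  proof (rule ccontr)
    assume "\<not> thesis"
    then have "v = 0\<^sub>v n" using that vc by (intro eq_vecI) auto
    then show False using v0 by contradiction
  qed
  have "(?A * ?A) *\<^sub>v v = ?A *\<^sub>v (t \<cdot>\<^sub>v v)" using A vc Av by simp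
  also have "\<dots> = (t * t) \<cdot>\<^sub>v v"
    using A vc by (simp add: mult_mat_vec Av smult_smult_assoc)
  finally have "((a * a + c * c) \<cdot>\<^sub>m 1\<^sub>m n + (a * c + c * a) \<cdot>\<^sub>m F) *\<^sub>v v = (t * t) \<cdot>\<^sub>v v"
    unfolding involution_combination_mult[OF F FF] .
  then have square_i: "(a * a + c * c) * v $ i + (2 * a * c) * (F *\<^sub>v v) $ i = t * t * v $ i"
    using i vc F by (auto simp: combination_mult_vec mult.assoc dest!: arg_cong[where f = "\<lambda>w. w $ i"])
  have eigen_i: "a * v $ i + c * (F *\<^sub>v v) $ i = t * v $ i"
    using arg_cong[OF Av, of "\<lambda>w. w $ i"] i vc F by (simp add: combination_mult_vec)
  have "((t - a)\<^sup>2 - c\<^sup>2) * v $ i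
      = 2 * a * (a * v $ i + c * (F *\<^sub>v v) $ i - t * v $ i)
        - ((a * a + c * c) * v $ i + (2 * a * c) * (F *\<^sub>v v) $ i - t * t * v $ i)"
    by (simp add: power2_eq_square algebra_simps)
  then have "((t - a)\<^sup>2 - c\<^sup>2) * v $ i = 0"
    unfolding square_i eigen_i by simp
  then show ?thesis using vi by simp
qed

definition swap_index :: "nat \<Rightarrow> nat \<Rightarrow> nat" where
  "swap_index d r = (r mod d) * d + r div d"

lemma index_pair_less:
  fixes i j d :: nat
  assumes "i < d" "j < d"
  shows "i * d + j < d * d"
proof -
  have "i * d + j < (i + 1) * d" using assms by simp
  also have "\<dots> \<le> d * d" using assms by (intro mult_le_mono1) simp
  finally show ?thesis .
qed

lemma swap_index_less: "r < d * d \<Longrightarrow> swap_index d r < d * d"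
  unfolding swap_index_def
  by (intro index_pair_less) (auto simp: less_mult_imp_div_less intro!: mod_less_divisor gr0I)

lemma swap_index_swap_index: "r < d * d \<Longrightarrow> swap_index d (swap_index d r) = r"
  unfolding swap_index_def by (cases "d = 0") (simp_all add: less_mult_imp_div_less)

lemma swap_index_eq_iff:
  assumes "r < d * d"
  shows "swap_index d r = s \<longleftrightarrow> s div d = r mod d \<and> s mod d = r div d"
  using assms unfolding swap_index_def
  by (cases "d = 0") (auto simp: less_mult_imp_div_less, metis div_mult_mod_eq)

lemma card_swap_index_fixed: "card {r. r < d * d \<and> swap_index d r = r} = d"
proof -
  have "{r. r < d * d \<and> swap_index d r = r} = (\<lambda>i. i * d + i) ` {..<d}"
  proof (intro equalityI subsetI)
    fix r assume "r \<in> {r. r < d * d \<and> swap_index d r = r}"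
    then have r: "r < d * d" and "swap_index d r = r" by simp_all
    then have "r mod d = r div d" using swap_index_eq_iff[OF r, of r] by blast
    then have "r = r div d * d + r div d" using div_mult_mod_eq[of r d] by simp
    moreover have "r div d < d" using r by (simp add: less_mult_imp_div_less)
    ultimately show "r \<in> (\<lambda>i. i * d + i) ` {..<d}" by blast
  next
    fix r assume "r \<in> (\<lambda>i. i * d + i) ` {..<d}"
    then obtain i where "i < d" "r = i * d + i" by blast
    then show "r \<in> {r. r < d * d \<and> swap_index d r = r}"
      by (simp add: index_pair_less swap_index_def)
  qed
  moreover have "inj_on (\<lambda>i. i * d + i) {..<d}"
  proof (rule inj_onI)
    fix i j assume "i * d + i = j * d + j"
    then have "i * Suc d = j * Suc d" by (simp only: mult_Suc_right add.commute)
    then show "i = j" by (simp del: mult_Suc_right)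
  qed
  ultimately show ?thesis by (simp add: card_image)
qed

lemma swap_index_eq_swap_iff:
  assumes "r < d * d" "s < d * d"
  shows "swap_index d r = s \<longleftrightarrow> r = swap_index d s"
  using assms swap_index_swap_index by metis

definition swap_mat :: "nat \<Rightarrow> 'a :: zero_neq_one mat" where
  "swap_mat d = mat (d * d) (d * d) (\<lambda>(r, c). if c = swap_index d r then 1 else 0)"

lemma swap_mat_carrier: "swap_mat d \<in> carrier_mat (d * d) (d * d)"
  by (simp add: swap_mat_def)

lemma swap_mat_mult_vec:
  fixes v :: "'a :: semiring_1 vec"
  assumes "v \<in> carrier_vec (d * d)" "i < d * d"
  shows "(swap_mat d *\<^sub>v v) $ i = v $ swap_index d i"
proof -
  have "(swap_mat d *\<^sub>v v) $ i = (\<Sum>j<d * d. (if j = swap_index d i then 1 else 0) * v $ j)"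
    using assms by (simp add: swap_mat_def scalar_prod_def atLeast0LessThan)
  also have "\<dots> = (\<Sum>j<d * d. if j = swap_index d i then v $ j else 0)"
    by (rule sum.cong) simp_all
  also have "\<dots> = v $ swap_index d i"
    using assms swap_index_less by simp
  finally show ?thesis .
qed

lemma swap_mat_squared: "swap_mat d * swap_mat d = (1\<^sub>m (d * d) :: 'a :: semiring_1 mat)"
proof (rule eq_matI)
  fix i j assume "i < dim_row (1\<^sub>m (d * d) :: 'a mat)" "j < dim_col (1\<^sub>m (d * d) :: 'a mat)"
  then have i: "i < d * d" and j: "j < d * d" by auto
  have dims: "dim_row (swap_mat d :: 'a mat) = d * d" "dim_col (swap_mat d :: 'a mat) = d * d"
    using swap_mat_carrier by auto
  have "(swap_mat d * swap_mat d :: 'a mat) $$ (i, j) = (swap_mat d *\<^sub>v col (swap_mat d :: 'a mat) j) $ i"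
    using i j dims by simp
  also have "\<dots> = col (swap_mat d) j $ swap_index d i"
    using i col_carrier_vec[OF j swap_mat_carrier] by (rule swap_mat_mult_vec[rotated])
  also have "\<dots> = (if j = swap_index d (swap_index d i) then 1 else 0)"
    using i j swap_index_less[OF i] by (simp add: swap_mat_def)
  also have "\<dots> = (1\<^sub>m (d * d) :: 'a mat) $$ (i, j)"
    using i j by (simp add: swap_index_swap_index)
  finally show "(swap_mat d * swap_mat d) $$ (i, j) = (1\<^sub>m (d * d) :: 'a mat) $$ (i, j)" .
qed (simp_all add: swap_mat_def)

lemma trace_combination_swap_mat:
  "mat_trace (x \<cdot>\<^sub>m 1\<^sub>m (d * d) + y \<cdot>\<^sub>m swap_mat d) = x * of_nat (d * d) + y * of_nat d"
proof -
  have "mat_trace (x \<cdot>\<^sub>m 1\<^sub>m (d * d) + y \<cdot>\<^sub>m swap_mat d)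
      = (\<Sum>r<d * d. x + (if swap_index d r = r then y else 0))"
    unfolding mat_trace_def by (intro sum.cong) (auto simp: swap_mat_def)
  also have "\<dots> = of_nat (d * d) * x + (\<Sum>r\<in>{r \<in> {..<d * d}. swap_index d r = r}. y)"
    by (simp add: sum.distrib flip: sum.inter_filter)
  also have "{r \<in> {..<d * d}. swap_index d r = r} = {r. r < d * d \<and> swap_index d r = r}"
    by auto
  finally show ?thesis by (simp add: card_swap_index_fixed mult.commute)
qed

lemma swap_mat_antisymmetric_eigenvector:
  assumes "d \<ge> 2"
  shows "eigenvector (swap_mat d) (unit_vec (d * d) 1 - unit_vec (d * d) d :: 'a :: comm_ring_1 vec) (- 1)"
proof -
  let ?v = "unit_vec (d * d) 1 - unit_vec (d * d) d :: 'a vec"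
  have lt: "1 < d * d" "d < d * d" using assms by (auto intro: less_le_trans[OF _ mult_le_mono1[of 2 d d]])
  have sw: "swap_index d 1 = d" "swap_index d d = 1" using assms by (simp_all add: swap_index_def)
  have vc: "?v \<in> carrier_vec (d * d)" by simp
  have "d \<noteq> 1" using assms by simp
  then have "?v $ 1 = 1" by (subst index_minus_vec) (use lt in simp_all)
  then have "?v \<noteq> 0\<^sub>v (d * d)" using lt by (metis index_zero_vec(1) zero_neq_one)
  moreover have "swap_mat d *\<^sub>v ?v = - 1 \<cdot>\<^sub>v ?v"
  proof (rule eq_vecI)
    fix k assume "k < dim_vec (- 1 \<cdot>\<^sub>v ?v)"
    then have k: "k < d * d" by simp
    then show "(swap_mat d *\<^sub>v ?v) $ k = (- 1 \<cdot>\<^sub>v ?v) $ k"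
      using lt sw swap_index_less[OF k] swap_index_eq_swap_iff[OF k]
      by (auto simp: swap_mat_mult_vec)
  qed (simp add: swap_mat_def)
  ultimately show ?thesis using vc unfolding eigenvector_def by (simp add: swap_mat_def)
qed

lemma iso_state_index:
  assumes "i < d * d" "j < d * d"
  shows "iso_state d \<alpha> $$ (i, j) = (if i = j then complex_of_real (\<alpha> / (real d)\<^sup>2) else 0)
     + (if i div d = i mod d \<and> j div d = j mod d then complex_of_real ((1 - \<alpha>) / real d) else 0)"
proof -
  have "complex_of_real (1 / sqrt (real d)) * cnj (complex_of_real (1 / sqrt (real d)))
      = complex_of_real (1 / real d)"
    by (simp flip: of_real_mult)
  then show ?thesis
    using assms by (auto simp: iso_state_def ket_bra_def phi_plus_def simp flip: of_real_mult)
qed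

lemma partial_transpose_iso_state:
  assumes "d > 0"
  shows "partial_transpose_A d (iso_state d \<alpha>) =
    complex_of_real (\<alpha> / (real d)\<^sup>2) \<cdot>\<^sub>m 1\<^sub>m (d * d) + complex_of_real ((1 - \<alpha>) / real d) \<cdot>\<^sub>m swap_mat d"
proof (rule eq_matI)
  fix r s assume "r < dim_row (complex_of_real (\<alpha> / (real d)\<^sup>2) \<cdot>\<^sub>m 1\<^sub>m (d * d)
      + complex_of_real ((1 - \<alpha>) / real d) \<cdot>\<^sub>m (swap_mat d :: complex mat))"
    and "s < dim_col (complex_of_real (\<alpha> / (real d)\<^sup>2) \<cdot>\<^sub>m 1\<^sub>m (d * d)
      + complex_of_real ((1 - \<alpha>) / real d) \<cdot>\<^sub>m (swap_mat d :: complex mat))"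
  then have r: "r < d * d" and s: "s < d * d" by (auto simp: swap_mat_def)
  have div_less: "r div d < d" "s div d < d" using r s by (auto simp: less_mult_imp_div_less)
  define i where "i = (s div d) * d + r mod d"
  define j where "j = (r div d) * d + s mod d"
  have ij: "i < d * d" "j < d * d"
    unfolding i_def j_def using div_less assms by (auto intro: index_pair_less)
  have digits: "i div d = s div d" "i mod d = r mod d" "j div d = r div d" "j mod d = s mod d"
    unfolding i_def j_def using assms by auto
  have "i = j \<longleftrightarrow> r = s"
    using digits by (metis div_mult_mod_eq)
  moreover have "i div d = i mod d \<and> j div d = j mod d \<longleftrightarrow> s = swap_index d r"
    unfolding digits using swap_index_eq_iff[OF r, of s] by auto
  moreover have "partial_transpose_A d (iso_state d \<alpha>) $$ (r, s) = iso_state d \<alpha> $$ (i, j)"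
    using r s unfolding partial_transpose_A_def i_def j_def by simp
  ultimately show "partial_transpose_A d (iso_state d \<alpha>) $$ (r, s) =
    (complex_of_real (\<alpha> / (real d)\<^sup>2) \<cdot>\<^sub>m 1\<^sub>m (d * d)
      + complex_of_real ((1 - \<alpha>) / real d) \<cdot>\<^sub>m swap_mat d) $$ (r, s)"
    using r s by (simp add: iso_state_index[OF ij] swap_mat_def)
qed (simp_all add: partial_transpose_A_def swap_mat_def)

lemma pt_moments_explicit:
  fixes d :: nat and \<alpha> :: real
  assumes "d > 0"
  defines "a \<equiv> \<alpha> / (real d)\<^sup>2" and "c \<equiv> (1 - \<alpha>) / real d"
  shows "pt_moment d \<alpha> 2 = (a\<^sup>2 + c\<^sup>2) * (real d)\<^sup>2 + 2 * a * c * real d"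
    and "pt_moment d \<alpha> 3 = (a ^ 3 + 3 * a * c\<^sup>2) * (real d)\<^sup>2 + (3 * a\<^sup>2 * c + c ^ 3) * real d"
proof -
  let ?A = "partial_transpose_A d (iso_state d \<alpha>)"
  have A: "?A = complex_of_real a \<cdot>\<^sub>m 1\<^sub>m (d * d) + complex_of_real c \<cdot>\<^sub>m swap_mat d"
    unfolding a_def c_def using assms(1) by (rule partial_transpose_iso_state)
  note mult = involution_combination_mult[OF swap_mat_carrier swap_mat_squared]
  have "?A ^\<^sub>m 2 = ?A * ?A"
    by (simp add: numeral_2_eq_2 partial_transpose_A_def)
  also have "\<dots> = complex_of_real (a\<^sup>2 + c\<^sup>2) \<cdot>\<^sub>m 1\<^sub>m (d * d) + complex_of_real (2 * a * c) \<cdot>\<^sub>m swap_mat d"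
    unfolding A mult by (simp add: power2_eq_square algebra_simps)
  finally have A2: "?A ^\<^sub>m 2 = \<dots>" .
  have "?A ^\<^sub>m 3 = ?A ^\<^sub>m 2 * ?A"
    by (simp add: numeral_3_eq_3 numeral_2_eq_2)
  also have "\<dots> = complex_of_real (a ^ 3 + 3 * a * c\<^sup>2) \<cdot>\<^sub>m 1\<^sub>m (d * d)
      + complex_of_real (3 * a\<^sup>2 * c + c ^ 3) \<cdot>\<^sub>m swap_mat d"
    unfolding A2 unfolding A mult by (simp add: power2_eq_square power3_eq_cube algebra_simps)
  finally have A3: "?A ^\<^sub>m 3 = \<dots>" .
  show "pt_moment d \<alpha> 2 = (a\<^sup>2 + c\<^sup>2) * (real d)\<^sup>2 + 2 * a * c * real d"
    unfolding pt_moment_def A2 trace_combination_swap_mat by (simp add: power2_eq_square)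
  show "pt_moment d \<alpha> 3 = (a ^ 3 + 3 * a * c\<^sup>2) * (real d)\<^sup>2 + (3 * a\<^sup>2 * c + c ^ 3) * real d"
    unfolding pt_moment_def A3 trace_combination_swap_mat by (simp add: power2_eq_square)
qed

lemma pt_moment_cube_less_square_iff:
  fixes d :: nat and \<alpha> :: real
  assumes "d \<ge> 2" "0 \<le> \<alpha>" "\<alpha> \<le> 1"
  shows "pt_moment d \<alpha> 3 < (pt_moment d \<alpha> 2)\<^sup>2 \<longleftrightarrow> \<alpha> / (real d)\<^sup>2 < (1 - \<alpha>) / real d"
proof -
  define D a c where "D = real d" and "a = \<alpha> / D\<^sup>2" and "c = (1 - \<alpha>) / D"
  have D: "D \<ge> 2" using assms(1) by (simp add: D_def)
  have "a \<ge> 0" "c \<ge> 0" using assms D by (simp_all add: a_def c_def)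
  have p2: "pt_moment d \<alpha> 2 = (a\<^sup>2 + c\<^sup>2) * D\<^sup>2 + 2 * a * c * D"
    and p3: "pt_moment d \<alpha> 3 = (a ^ 3 + 3 * a * c\<^sup>2) * D\<^sup>2 + (3 * a\<^sup>2 * c + c ^ 3) * D"
    using pt_moments_explicit[of d \<alpha>] assms(1) by (simp_all add: D_def a_def c_def)
  \<comment> \<open>\<open>Tr \<rho>\<^sup>T\<^sup>\<^sub>A = 1\<close>\<close>
  have trace: "D\<^sup>2 * a + D * c = 1"
    using D by (simp add: a_def c_def field_simps power2_eq_square)
  have "(pt_moment d \<alpha> 2)\<^sup>2 - pt_moment d \<alpha> 3
      = (pt_moment d \<alpha> 2)\<^sup>2 - pt_moment d \<alpha> 3 * (D\<^sup>2 * a + D * c)"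
    unfolding trace by simp
  also have "\<dots> = (D\<^sup>2 * (D\<^sup>2 - 1)) * (c\<^sup>2 * (c\<^sup>2 - a\<^sup>2))"
    unfolding p2 p3 by (simp add: power2_eq_square power3_eq_cube algebra_simps)
  finally have gap: "(pt_moment d \<alpha> 2)\<^sup>2 - pt_moment d \<alpha> 3 = \<dots>" .
  have "D\<^sup>2 \<ge> 2 * 2" using mult_mono[OF D D] D unfolding power2_eq_square by simp
  then have pos: "D\<^sup>2 * (D\<^sup>2 - 1) > 0" by (intro mult_pos_pos) linarith+
  have "pt_moment d \<alpha> 3 < (pt_moment d \<alpha> 2)\<^sup>2 \<longleftrightarrow> 0 < D\<^sup>2 * (D\<^sup>2 - 1) * (c\<^sup>2 * (c\<^sup>2 - a\<^sup>2))"
    unfolding gap[symmetric] by simp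
  also have "\<dots> \<longleftrightarrow> 0 < c\<^sup>2 * (c\<^sup>2 - a\<^sup>2)"
    using pos zero_less_mult_pos mult_pos_pos by blast
  also have "\<dots> \<longleftrightarrow> a\<^sup>2 < c\<^sup>2"
    using zero_le_power2[of a] by (auto simp: zero_less_mult_iff)
  also have "\<dots> \<longleftrightarrow> a < c"
    using \<open>a \<ge> 0\<close> \<open>c \<ge> 0\<close> by (auto intro: power2_less_imp_less power2_strict_mono)
  finally show ?thesis by (simp add: D_def a_def c_def)
qed

lemma negative_eigenvalue_combination_swap_mat_iff:
  fixes a c :: real
  assumes "d \<ge> 2" "a \<ge> 0" "c \<ge> 0"
  shows "(\<exists>t::real. t < 0 \<and> eigenvalue (complex_of_real a \<cdot>\<^sub>m 1\<^sub>m (d * d) + complex_of_real c \<cdot>\<^sub>m swap_mat d)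
      (complex_of_real t)) \<longleftrightarrow> a < c"
proof
  assume "\<exists>t::real. t < 0 \<and> eigenvalue (complex_of_real a \<cdot>\<^sub>m 1\<^sub>m (d * d) + complex_of_real c \<cdot>\<^sub>m swap_mat d)
      (complex_of_real t)"
  then obtain t :: real where "t < 0" and "(complex_of_real t - complex_of_real a)\<^sup>2 = (complex_of_real c)\<^sup>2"
    using eigenvalue_involution_combination[OF swap_mat_carrier swap_mat_squared] by blast
  then have "(t - a)\<^sup>2 = c\<^sup>2"
    by (metis of_real_diff of_real_eq_iff of_real_power)
  then have "t = a + c \<or> t = a - c"
    by (auto simp: power2_eq_iff)
  then show "a < c"
    using \<open>t < 0\<close> assms by auto
next
  assume "a < c"
  have "eigenvector (complex_of_real a \<cdot>\<^sub>m 1\<^sub>m (d * d) + complex_of_real c \<cdot>\<^sub>m swap_mat d)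
      (unit_vec (d * d) 1 - unit_vec (d * d) d) (complex_of_real a + complex_of_real c * - 1)"
    by (rule eigenvector_combination[OF swap_mat_carrier swap_mat_antisymmetric_eigenvector[OF assms(1)]])
  then show "\<exists>t::real. t < 0 \<and> eigenvalue (complex_of_real a \<cdot>\<^sub>m 1\<^sub>m (d * d)
      + complex_of_real c \<cdot>\<^sub>m swap_mat d) (complex_of_real t)"
    using \<open>a < c\<close> unfolding eigenvalue_def by (intro exI[of _ "a - c"]) auto
qed

lemma iso_state_threshold:
  fixes \<alpha> :: real
  assumes "d > 0"
  shows "\<alpha> / (real d)\<^sup>2 < (1 - \<alpha>) / real d \<longleftrightarrow> \<alpha> < real d / (real d + 1)"
  using assms by (simp add: field_simps power2_eq_square)

theorem mainTheorem5:
  fixes d :: nat and \<alpha> :: real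
  assumes "d \<ge> 2" and "0 \<le> \<alpha>" and "\<alpha> \<le> 1"
  shows "(pt_moment d \<alpha> 3 < (pt_moment d \<alpha> 2)^2 \<longleftrightarrow>
            (\<exists>t::real. t < 0 \<and> eigenvalue (partial_transpose_A d (iso_state d \<alpha>)) (complex_of_real t)))
       \<and> ((\<exists>t::real. t < 0 \<and> eigenvalue (partial_transpose_A d (iso_state d \<alpha>)) (complex_of_real t))
            \<longleftrightarrow> \<alpha> < real d / (real d + 1))"
proof -
  have "d > 0" using assms(1) by simp
  have negative: "(\<exists>t::real. t < 0 \<and> eigenvalue (partial_transpose_A d (iso_state d \<alpha>)) (complex_of_real t))
      \<longleftrightarrow> \<alpha> / (real d)\<^sup>2 < (1 - \<alpha>) / real d"
    unfolding partial_transpose_iso_state[OF \<open>d > 0\<close>]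
    using assms by (intro negative_eigenvalue_combination_swap_mat_iff) simp_all
  show ?thesis
    unfolding negative pt_moment_cube_less_square_iff[OF assms] iso_state_threshold[OF \<open>d > 0\<close>] by simp
qed

end
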